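(* Let $\pi\in S_n$ and $e=\Theta(\pi)$. Then: (a) $\pi$ avoids the vincular pattern $3\underline{214}$ if and only if $e$ avoids the consecutive pattern $120$; (b) $\pi$ avoids the vincular pattern $2\underline{413}$ if and only if $e$ avoids the consecutive pattern $021$. In particular $|\mathbf{I}_n(120)|=|S_n(3\underline{214})|$ and $|\mathbf{I}_n(021)|=|S_n(2\underline{413})|$ for all $n$.
   Context: $S_n$ is the set of permutations of $[n]$, and $\mathbf{I}_n$ the set of integer sequences $e_1\dots e_n$ with $0\le e_i<i$. $\Theta:S_n\to\mathbf{I}_n$ is the bijection $\pi\mapsto e$ with $e_i=|\{j: j<i,\ \pi_j>\pi_i\}|$. $\pi$ contains $3\underline{214}$ if there exist $j<i$ with $\pi_{i+1}<\pi_i<\pi_j<\pi_{i+2}$; $\pi$ contains $2\underline{413}$ if there exist $j<i$ with $\pi_{i+1}<\pi_j<\pi_{i+2}<\pi_i$; avoiding means not containing, and $S_n(\sigma)$ is the set of permutations avoiding $\sigma$. $e$ avoids the consecutive pattern $120$ if there is no $i$ with $e_{i+2}<e_i<e_{i+1}$, and avoids $021$ if there is no $i$ with $e_i<e_{i+2}<e_{i+1}$; $\mathbf{I}_n(p)$ is the set of $e\in\mathbf{I}_n$ avoiding $p$. *)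

theory Defs
  imports "HOL-Combinatorics.Permutations"
begin

text \<open>Sequences and permutations are 1-indexed functions on nat; positions are 1..n.\<close>

definition Sn :: "nat \<Rightarrow> (nat \<Rightarrow> nat) set" where
  "Sn n = {\<pi>. \<pi> permutes {1..n}}"

definition In :: "nat \<Rightarrow> (nat \<Rightarrow> nat) set" where
  "In n = {e. (\<forall>i\<in>{1..n}. e i < i) \<and> (\<forall>i. i \<notin> {1..n} \<longrightarrow> e i = 0)}"

definition Theta :: "nat \<Rightarrow> (nat \<Rightarrow> nat) \<Rightarrow> (nat \<Rightarrow> nat)" where
  "Theta n \<pi> = (\<lambda>i. if i \<in> {1..n} then card {j. 1 \<le> j \<and> j < i \<and> \<pi> j > \<pi> i} else 0)"

definition contains_3_214 :: "nat \<Rightarrow> (nat \<Rightarrow> nat) \<Rightarrow> bool" where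
  "contains_3_214 n \<pi> \<longleftrightarrow> (\<exists>i j. 1 \<le> j \<and> j < i \<and> i + 2 \<le> n \<and>
      \<pi> (i+1) < \<pi> i \<and> \<pi> i < \<pi> j \<and> \<pi> j < \<pi> (i+2))"

definition contains_2_413 :: "nat \<Rightarrow> (nat \<Rightarrow> nat) \<Rightarrow> bool" where
  "contains_2_413 n \<pi> \<longleftrightarrow> (\<exists>i j. 1 \<le> j \<and> j < i \<and> i + 2 \<le> n \<and>
      \<pi> (i+1) < \<pi> j \<and> \<pi> j < \<pi> (i+2) \<and> \<pi> (i+2) < \<pi> i)"

definition avoids_120 :: "nat \<Rightarrow> (nat \<Rightarrow> nat) \<Rightarrow> bool" where
  "avoids_120 n e \<longleftrightarrow> \<not> (\<exists>i. 1 \<le> i \<and> i + 2 \<le> n \<and> e (i+2) < e i \<and> e i < e (i+1))"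

definition avoids_021 :: "nat \<Rightarrow> (nat \<Rightarrow> nat) \<Rightarrow> bool" where
  "avoids_021 n e \<longleftrightarrow> \<not> (\<exists>i. 1 \<le> i \<and> i + 2 \<le> n \<and> e i < e (i+2) \<and> e (i+2) < e (i+1))"

end

theory Submission
  imports Defs
begin

(*
  Write L_k(x) for the number of positions j < k with pi(j) > x, so that e_i = L_i(pi(i)).
  With a, b, d the values of pi at i, i+1, i+2 one has e_(i+1) = L_i(b) + [b < a] and
  e_(i+2) = L_i(d) + [d < a] + [d < b]; moreover L_i is antitone, and L_i(y) < L_i(x) exactly
  when some earlier value lies in (x, y]. A case analysis on the relative order of a, b, d
  shows that a consecutive 120 (resp. 021) at i in e means b < a < d (resp. b < d < a) together
  with an earlier value strictly between a and d (resp. b and d): an occurrence of 3-214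
  (resp. 2-413). The counting statements hold because Theta is a bijection S_n -> I_n: it is
  injective, since at the last position where two permutations differ the smaller value has
  strictly more larger values before it, and |S_n| = n! = |I_n|.
*)

definition larger_before :: "(nat \<Rightarrow> nat) \<Rightarrow> nat \<Rightarrow> nat \<Rightarrow> nat" where
  "larger_before \<pi> k x = card {j. 1 \<le> j \<and> j < k \<and> x < \<pi> j}"

lemma finite_larger_before_set: "finite {j. 1 \<le> j \<and> j < (k::nat) \<and> x < \<pi> j}"
  by (rule finite_subset[of _ "{..<k}"]) auto

lemma Theta_eq_larger_before: "i \<in> {1..n} \<Longrightarrow> Theta n \<pi> i = larger_before \<pi> i (\<pi> i)"
  unfolding Theta_def larger_before_def by simp

lemma larger_before_Suc:
  assumes "1 \<le> k"
  shows "larger_before \<pi> (Suc k) x = larger_before \<pi> k x + (if x < \<pi> k then 1 else 0)"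
proof -
  have "{j. 1 \<le> j \<and> j < Suc k \<and> x < \<pi> j} =
      (if x < \<pi> k then insert k else id) {j. 1 \<le> j \<and> j < k \<and> x < \<pi> j}"
    using assms less_Suc_eq by auto
  then show ?thesis
    unfolding larger_before_def by (simp add: finite_larger_before_set)
qed

lemma larger_before_antimono: "x \<le> y \<Longrightarrow> larger_before \<pi> k y \<le> larger_before \<pi> k x"
  unfolding larger_before_def by (rule card_mono[OF finite_larger_before_set]) auto

lemma larger_before_less_iff:
  "larger_before \<pi> k y < larger_before \<pi> k x \<longleftrightarrow> (\<exists>j. 1 \<le> j \<and> j < k \<and> x < \<pi> j \<and> \<pi> j \<le> y)"
proof
  assume less: "larger_before \<pi> k y < larger_before \<pi> k x"
  show "\<exists>j. 1 \<le> j \<and> j < k \<and> x < \<pi> j \<and> \<pi> j \<le> y"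
  proof (rule ccontr)
    assume "\<not> ?thesis"
    then have "{j. 1 \<le> j \<and> j < k \<and> x < \<pi> j} \<subseteq> {j. 1 \<le> j \<and> j < k \<and> y < \<pi> j}"
      using not_le by blast
    then have "larger_before \<pi> k x \<le> larger_before \<pi> k y"
      unfolding larger_before_def by (rule card_mono[OF finite_larger_before_set])
    with less show False by simp
  qed
next
  assume "\<exists>j. 1 \<le> j \<and> j < k \<and> x < \<pi> j \<and> \<pi> j \<le> y"
  then obtain j where j: "1 \<le> j" "j < k" "x < \<pi> j" "\<pi> j \<le> y" by blast
  then have "x < y" by simp
  then have "{j. 1 \<le> j \<and> j < k \<and> y < \<pi> j} \<subseteq> {j. 1 \<le> j \<and> j < k \<and> x < \<pi> j}"
    by auto
  moreover have "j \<in> {j. 1 \<le> j \<and> j < k \<and> x < \<pi> j} - {j. 1 \<le> j \<and> j < k \<and> y < \<pi> j}"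
    using j by simp
  ultimately have "{j. 1 \<le> j \<and> j < k \<and> y < \<pi> j} \<subset> {j. 1 \<le> j \<and> j < k \<and> x < \<pi> j}"
    by blast
  then show "larger_before \<pi> k y < larger_before \<pi> k x"
    unfolding larger_before_def by (rule psubset_card_mono[OF finite_larger_before_set])
qed

lemma larger_before_next_two:
  assumes "1 \<le> i"
  shows "larger_before \<pi> (i+1) (\<pi> (i+1)) =
           larger_before \<pi> i (\<pi> (i+1)) + (if \<pi> (i+1) < \<pi> i then 1 else 0)"
    and "larger_before \<pi> (i+2) (\<pi> (i+2)) =
           larger_before \<pi> i (\<pi> (i+2)) + (if \<pi> (i+2) < \<pi> i then 1 else 0)
             + (if \<pi> (i+2) < \<pi> (i+1) then 1 else 0)"
  using larger_before_Suc[OF assms] larger_before_Suc[of "i+1"] assms by simp_all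

lemma consecutive_120_iff_3_214:
  assumes "inj \<pi>" and "1 \<le> i"
  shows "larger_before \<pi> (i+2) (\<pi> (i+2)) < larger_before \<pi> i (\<pi> i) \<and>
           larger_before \<pi> i (\<pi> i) < larger_before \<pi> (i+1) (\<pi> (i+1))
     \<longleftrightarrow> (\<exists>j. 1 \<le> j \<and> j < i \<and> \<pi> (i+1) < \<pi> i \<and> \<pi> i < \<pi> j \<and> \<pi> j < \<pi> (i+2))"
    (is "?pattern \<longleftrightarrow> ?occurrence")
proof -
  define a b d where "a = \<pi> i" and "b = \<pi> (i+1)" and "d = \<pi> (i+2)"
  define L where "L = larger_before \<pi> i"
  have distinct: "a \<noteq> b" "a \<noteq> d"
    unfolding a_def b_def d_def by (simp_all add: inj_eq[OF assms(1)])
  have "\<pi> j \<le> d \<longleftrightarrow> \<pi> j < d" if "j < i" for j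
    using that unfolding d_def by (auto simp: le_less inj_eq[OF assms(1)])
  then have between: "L d < L a \<longleftrightarrow> (\<exists>j. 1 \<le> j \<and> j < i \<and> a < \<pi> j \<and> \<pi> j < d)"
    unfolding L_def larger_before_less_iff by (metis (no_types, lifting))
  note next_two = larger_before_next_two[OF assms(2), of \<pi>, folded a_def b_def d_def L_def]
  show ?thesis
  proof
    assume ?pattern
    then have pattern: "L d + (if d < a then 1 else 0) + (if d < b then 1 else 0) < L a"
        "L a < L b + (if b < a then 1 else 0)"
      using next_two unfolding a_def b_def d_def L_def by simp_all
    have "b < a"
      using pattern(2) larger_before_antimono[of a b \<pi> i] distinct(1) unfolding L_def
      by (cases "b < a") simp_all
    moreover have "a < d"
      using pattern(1) larger_before_antimono[of d a \<pi> i] distinct(2) unfolding L_def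
      by (cases "a < d") simp_all
    ultimately show ?occurrence
      using pattern(1) between unfolding a_def b_def d_def by auto
  next
    assume ?occurrence
    then have "b < a" "a < d" "L d < L a"
      using between unfolding a_def b_def d_def by auto
    moreover have "L a \<le> L b"
      using \<open>b < a\<close> larger_before_antimono[of b a \<pi> i] unfolding L_def by simp
    ultimately show ?pattern
      using next_two unfolding a_def b_def d_def L_def by simp
  qed
qed

lemma consecutive_021_iff_2_413:
  assumes "inj \<pi>" and "1 \<le> i"
  shows "larger_before \<pi> i (\<pi> i) < larger_before \<pi> (i+2) (\<pi> (i+2)) \<and>
           larger_before \<pi> (i+2) (\<pi> (i+2)) < larger_before \<pi> (i+1) (\<pi> (i+1))
     \<longleftrightarrow> (\<exists>j. 1 \<le> j \<and> j < i \<and> \<pi> (i+1) < \<pi> j \<and> \<pi> j < \<pi> (i+2) \<and> \<pi> (i+2) < \<pi> i)"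
    (is "?pattern \<longleftrightarrow> ?occurrence")
proof -
  define a b d where "a = \<pi> i" and "b = \<pi> (i+1)" and "d = \<pi> (i+2)"
  define L where "L = larger_before \<pi> i"
  have distinct: "a \<noteq> b" "a \<noteq> d" "b \<noteq> d"
    unfolding a_def b_def d_def by (simp_all add: inj_eq[OF assms(1)])
  have "\<pi> j \<le> d \<longleftrightarrow> \<pi> j < d" if "j < i" for j
    using that unfolding d_def by (auto simp: le_less inj_eq[OF assms(1)])
  then have between: "L d < L b \<longleftrightarrow> (\<exists>j. 1 \<le> j \<and> j < i \<and> b < \<pi> j \<and> \<pi> j < d)"
    unfolding L_def larger_before_less_iff by (metis (no_types, lifting))
  note next_two = larger_before_next_two[OF assms(2), of \<pi>, folded a_def b_def d_def L_def]
  show ?thesis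
  proof
    assume ?pattern
    then have pattern: "L a < L d + (if d < a then 1 else 0) + (if d < b then 1 else 0)"
        "L d + (if d < a then 1 else 0) + (if d < b then 1 else 0) < L b + (if b < a then 1 else 0)"
      using next_two unfolding a_def b_def d_def L_def by simp_all
    have "b < d"
      using pattern(2) larger_before_antimono[of d b \<pi> i] distinct(3) unfolding L_def
      by (cases "b < d") (simp_all split: if_splits)
    moreover have "d < a"
      using pattern(1) \<open>b < d\<close> larger_before_antimono[of a d \<pi> i] distinct(2) unfolding L_def
      by (cases "d < a") simp_all
    ultimately show ?occurrence
      using pattern(2) between unfolding a_def b_def d_def by auto
  next
    assume ?occurrence
    then have "b < d" "d < a" "L d < L b"
      using between unfolding a_def b_def d_def by auto
    moreover have "L a \<le> L d"
      using \<open>d < a\<close> larger_before_antimono[of d a \<pi> i] unfolding L_def by simp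
    ultimately show ?pattern
      using next_two unfolding a_def b_def d_def L_def by simp
  qed
qed

lemma avoids_120_Theta_iff:
  assumes "\<pi> \<in> Sn n"
  shows "avoids_120 n (Theta n \<pi>) \<longleftrightarrow> \<not> contains_3_214 n \<pi>"
proof -
  have "inj \<pi>" using assms permutes_inj unfolding Sn_def by blast
  have "(1 \<le> i \<and> i + 2 \<le> n \<and> Theta n \<pi> (i+2) < Theta n \<pi> i \<and> Theta n \<pi> i < Theta n \<pi> (i+1)) \<longleftrightarrow>
      (\<exists>j. 1 \<le> j \<and> j < i \<and> i + 2 \<le> n \<and>
             \<pi> (i+1) < \<pi> i \<and> \<pi> i < \<pi> j \<and> \<pi> j < \<pi> (i+2))" for i
  proof (cases "1 \<le> i \<and> i + 2 \<le> n")
    case True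
    then show ?thesis
      using consecutive_120_iff_3_214[OF \<open>inj \<pi>\<close>, of i] by (simp add: Theta_eq_larger_before)
  qed auto
  then show ?thesis unfolding avoids_120_def contains_3_214_def by simp
qed

lemma avoids_021_Theta_iff:
  assumes "\<pi> \<in> Sn n"
  shows "avoids_021 n (Theta n \<pi>) \<longleftrightarrow> \<not> contains_2_413 n \<pi>"
proof -
  have "inj \<pi>" using assms permutes_inj unfolding Sn_def by blast
  have "(1 \<le> i \<and> i + 2 \<le> n \<and> Theta n \<pi> i < Theta n \<pi> (i+2) \<and> Theta n \<pi> (i+2) < Theta n \<pi> (i+1)) \<longleftrightarrow>
      (\<exists>j. 1 \<le> j \<and> j < i \<and> i + 2 \<le> n \<and>
             \<pi> (i+1) < \<pi> j \<and> \<pi> j < \<pi> (i+2) \<and> \<pi> (i+2) < \<pi> i)" for i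
  proof (cases "1 \<le> i \<and> i + 2 \<le> n")
    case True
    then show ?thesis
      using consecutive_021_iff_2_413[OF \<open>inj \<pi>\<close>, of i] by (simp add: Theta_eq_larger_before)
  qed auto
  then show ?thesis unfolding avoids_021_def contains_2_413_def by simp
qed

lemma Theta_add_larger_after:
  assumes "\<pi> permutes {1..n}" and "i \<in> {1..n}"
  shows "Theta n \<pi> i + card {j\<in>{i<..n}. \<pi> i < \<pi> j} + \<pi> i = n"
proof -
  define S where "S = {j\<in>{1..n}. \<pi> i < \<pi> j}"
  have split: "S = {j. 1 \<le> j \<and> j < i \<and> \<pi> i < \<pi> j} \<union> {j\<in>{i<..n}. \<pi> i < \<pi> j}"
    using assms(2) unfolding S_def by (auto simp: not_less le_less)
  have "card S = Theta n \<pi> i + card {j\<in>{i<..n}. \<pi> i < \<pi> j}"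
    unfolding split using assms(2)
    by (subst card_Un_disjoint) (auto simp: Theta_def finite_larger_before_set)
  moreover have "\<pi> ` S = {\<pi> i<..n}"
    using permutes_image[OF assms(1)] assms(2) unfolding S_def by fastforce
  then have "card S = n - \<pi> i"
    using card_image[OF inj_on_subset[OF permutes_inj[OF assms(1)] subset_UNIV]] by (metis card_greaterThanAtMost)
  moreover have "\<pi> i \<le> n"
    using permutes_image[OF assms(1)] assms(2) by fastforce
  ultimately show ?thesis by simp
qed

lemma Theta_differs_at_last_difference:
  assumes \<pi>: "\<pi> permutes {1..n}" and \<sigma>: "\<sigma> permutes {1..n}" and i: "i \<in> {1..n}"
    and later: "\<And>j. i < j \<Longrightarrow> \<pi> j = \<sigma> j" and less: "\<pi> i < \<sigma> i"
  shows "Theta n \<pi> i \<noteq> Theta n \<sigma> i"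
proof
  assume eq: "Theta n \<pi> i = Theta n \<sigma> i"
  define c where "c x = card {j\<in>{i<..n}. x < \<pi> j}" for x
  have "Theta n \<pi> i + c (\<pi> i) + \<pi> i = n"
    using Theta_add_larger_after[OF \<pi> i] unfolding c_def .
  moreover have "{j\<in>{i<..n}. \<sigma> i < \<sigma> j} = {j\<in>{i<..n}. \<sigma> i < \<pi> j}"
    using later by auto
  then have "Theta n \<sigma> i + c (\<sigma> i) + \<sigma> i = n"
    using Theta_add_larger_after[OF \<sigma> i] unfolding c_def by simp
  moreover have "c (\<pi> i) \<le> c (\<sigma> i) + card {j\<in>{i<..n}. \<pi> i < \<pi> j \<and> \<pi> j < \<sigma> i}"
  proof -
    have "{j\<in>{i<..n}. \<pi> i < \<pi> j} \<subseteq>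
        {j\<in>{i<..n}. \<sigma> i < \<pi> j} \<union> {j\<in>{i<..n}. \<pi> i < \<pi> j \<and> \<pi> j < \<sigma> i}"
    proof
      fix j assume j: "j \<in> {j\<in>{i<..n}. \<pi> i < \<pi> j}"
      then have "\<sigma> j \<noteq> \<sigma> i"
        using inj_eq[OF permutes_inj[OF \<sigma>], of j i] by simp
      then have "\<pi> j \<noteq> \<sigma> i"
        using j later by simp
      then show "j \<in> {j\<in>{i<..n}. \<sigma> i < \<pi> j} \<union> {j\<in>{i<..n}. \<pi> i < \<pi> j \<and> \<pi> j < \<sigma> i}"
        using j by (auto simp: nat_neq_iff)
    qed
    then have "c (\<pi> i) \<le> card ({j\<in>{i<..n}. \<sigma> i < \<pi> j} \<union> {j\<in>{i<..n}. \<pi> i < \<pi> j \<and> \<pi> j < \<sigma> i})"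
      unfolding c_def by (rule card_mono[rotated]) simp
    then show ?thesis
      unfolding c_def using card_Un_le le_trans by blast
  qed
  moreover have "card {j\<in>{i<..n}. \<pi> i < \<pi> j \<and> \<pi> j < \<sigma> i} \<le> card {\<pi> i<..<\<sigma> i}"
    by (rule card_inj_on_le[OF inj_on_subset[OF permutes_inj[OF \<pi>] subset_UNIV]]) auto
  ultimately show False using eq less by simp
qed

lemma Theta_inj_on: "inj_on (Theta n) (Sn n)"
proof (rule inj_onI, rule ccontr)
  fix \<pi> \<sigma> assume "\<pi> \<in> Sn n" "\<sigma> \<in> Sn n" and eq: "Theta n \<pi> = Theta n \<sigma>" and "\<pi> \<noteq> \<sigma>"
  then have \<pi>: "\<pi> permutes {1..n}" and \<sigma>: "\<sigma> permutes {1..n}"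
    unfolding Sn_def by simp_all
  define D where "D = {i. \<pi> i \<noteq> \<sigma> i}"
  have "D \<subseteq> {1..n}"
  proof
    fix x assume "x \<in> D"
    then show "x \<in> {1..n}"
      using permutes_not_in[OF \<pi>, of x] permutes_not_in[OF \<sigma>, of x] unfolding D_def
      by (cases "x \<in> {1..n}") simp_all
  qed
  then have "finite D"
    by (rule finite_subset) simp
  moreover have "D \<noteq> {}"
    using \<open>\<pi> \<noteq> \<sigma>\<close> unfolding D_def by auto
  ultimately have "Max D \<in> D"
    by (rule Max_in)
  have later: "\<pi> j = \<sigma> j" if "Max D < j" for j
    using Max_ge[OF \<open>finite D\<close>, of j] that unfolding D_def by auto
  have m: "Max D \<in> {1..n}"
    using \<open>Max D \<in> D\<close> \<open>D \<subseteq> {1..n}\<close> by blast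
  consider "\<pi> (Max D) < \<sigma> (Max D)" | "\<sigma> (Max D) < \<pi> (Max D)"
    using \<open>Max D \<in> D\<close> unfolding D_def by (auto simp: nat_neq_iff)
  then show False
  proof cases
    case 1
    then show False
      using Theta_differs_at_last_difference[OF \<pi> \<sigma> m later] eq by simp
  next
    case 2
    then show False
      using Theta_differs_at_last_difference[OF \<sigma> \<pi> m later[symmetric]] eq by simp
  qed
qed

lemma Theta_in_In: "Theta n \<pi> \<in> In n"
proof -
  have "Theta n \<pi> i < i" if "i \<in> {1..n}" for i
  proof -
    have "{j. 1 \<le> j \<and> j < i \<and> \<pi> i < \<pi> j} \<subseteq> {1..<i}"
      by auto
    then have "card {j. 1 \<le> j \<and> j < i \<and> \<pi> i < \<pi> j} \<le> card {1..<i}"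
      by (rule card_mono[rotated]) simp
    then show ?thesis using that by (simp add: Theta_def) arith
  qed
  then show ?thesis unfolding In_def by (auto simp: Theta_def)
qed

lemma card_In: "card (In n) = fact n"
proof -
  have "bij_betw (\<lambda>e. restrict e {1..n}) (In n) (PiE {1..n} (\<lambda>i. {..<i}))"
    by (rule bij_betw_byWitness[where f' = "\<lambda>f i. if i \<in> {1..n} then f i else 0"])
      (auto simp: In_def PiE_def Pi_def extensional_def)
  then have "card (In n) = card (PiE {1..n} (\<lambda>i. {..<i}))"
    by (rule bij_betw_same_card)
  also have "\<dots> = fact n"
    by (simp add: card_PiE fact_prod)
  finally show ?thesis .
qed

lemma card_Sn: "card (Sn n) = fact n"
  unfolding Sn_def by (simp add: card_permutations)

lemma Theta_image_Sn: "Theta n ` Sn n = In n"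
proof (rule card_subset_eq)
  show "finite (In n)"
    using card_In[of n] by (metis card.infinite fact_nonzero)
  show "Theta n ` Sn n \<subseteq> In n"
    using Theta_in_In by blast
  show "card (Theta n ` Sn n) = card (In n)"
    by (simp add: card_image[OF Theta_inj_on] card_Sn card_In)
qed

lemma card_In_filter_eq:
  assumes "\<And>\<pi>. \<pi> \<in> Sn n \<Longrightarrow> P (Theta n \<pi>) \<longleftrightarrow> Q \<pi>"
  shows "card {e\<in>In n. P e} = card {\<pi>\<in>Sn n. Q \<pi>}"
proof -
  have "{e\<in>In n. P e} = Theta n ` {\<pi>\<in>Sn n. Q \<pi>}"
  proof
    show "{e\<in>In n. P e} \<subseteq> Theta n ` {\<pi>\<in>Sn n. Q \<pi>}"
    proof
      fix e assume e: "e \<in> {e\<in>In n. P e}"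
      then obtain \<pi> where "\<pi> \<in> Sn n" "e = Theta n \<pi>"
        using Theta_image_Sn[of n] by auto
      with e assms show "e \<in> Theta n ` {\<pi>\<in>Sn n. Q \<pi>}" by auto
    qed
    show "Theta n ` {\<pi>\<in>Sn n. Q \<pi>} \<subseteq> {e\<in>In n. P e}"
      using Theta_in_In assms by auto
  qed
  then show ?thesis
    by (simp add: card_image inj_on_subset[OF Theta_inj_on])
qed

theorem mainTheorem19:
  shows "(\<forall>n. \<forall>\<pi>\<in>Sn n.
            (\<not> contains_3_214 n \<pi> \<longleftrightarrow> avoids_120 n (Theta n \<pi>)) \<and>
            (\<not> contains_2_413 n \<pi> \<longleftrightarrow> avoids_021 n (Theta n \<pi>))) \<and>
         (\<forall>n. card {e\<in>In n. avoids_120 n e} = card {\<pi>\<in>Sn n. \<not> contains_3_214 n \<pi>} \<and>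
              card {e\<in>In n. avoids_021 n e} = card {\<pi>\<in>Sn n. \<not> contains_2_413 n \<pi>})"
  using avoids_120_Theta_iff avoids_021_Theta_iff
  by (auto intro!: card_In_filter_eq)

end
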